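(* Let $m,n\ge2$, $D\in\mathcal{D}$ and $j\in\{1,\dots,n\}$. If the $j$-th column of $D$ has at most $m-2$ nonzero entries, then $\{D,\mathrm{U}_j\}$ is not $\mathcal{I}$-maximized.
   Context: Channels from $\{1,\dots,m\}$ to $\{1,\dots,n\}$ are $m\times n$ row-stochastic matrices; $\mathcal{D}$ is the set of deterministic (0-1) channels, $\mathrm{rank}(D)$ the matrix rank; $\mathrm{U}_j\in\mathcal{D}$ is the deterministic channel whose $j$-th column is all ones. For a channel $W$, $\Lambda(W)=\{\lambda\text{ probability distribution on }\mathcal{D}: W=\sum_D\lambda_DD\}$, $C_{11}(\lambda)=\sum_D\lambda_D\log_2\mathrm{rank}(D)$, $\overline{C}_{11}(W)=\sup_{\lambda\in\Lambda(W)}C_{11}(\lambda)$. A subset $S\subseteq\mathcal{D}$ is $\mathcal{I}$-maximized if there is a probability distribution $\lambda$ on $\mathcal{D}$ with $\mathrm{supp}(\lambda)=S$ and $C_{11}(\lambda)=\overline{C}_{11}(W)$ where $W=\sum_D\lambda_DD$. *)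

theory Defs
  imports "HOL-Analysis.Analysis"
begin

text \<open>Channels from {1..m} to {1..n}: m x n real matrices (rows indexed by 'm,
columns by 'n), row-stochastic.\<close>

definition channel :: "real^'n^'m \<Rightarrow> bool" where
  "channel W \<longleftrightarrow> (\<forall>i j. W $ i $ j \<ge> 0) \<and> (\<forall>i. (\<Sum>j\<in>UNIV. W $ i $ j) = 1)"

definition det_channels :: "(real^'n^'m) set" where
  "det_channels = {D. channel D \<and> (\<forall>i j. D $ i $ j = 0 \<or> D $ i $ j = 1)}"

definition Uch :: "'n \<Rightarrow> real^'n^'m" where
  "Uch j = (\<chi> i k. if k = j then 1 else 0)"

definition prob_dist_det :: "(real^'n^'m \<Rightarrow> real) \<Rightarrow> bool" where
  "prob_dist_det lam \<longleftrightarrow> (\<forall>D. lam D \<ge> 0) \<and> (\<forall>D. D \<notin> det_channels \<longrightarrow> lam D = 0)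
     \<and> (\<Sum>D\<in>det_channels. lam D) = 1"

definition mix :: "(real^'n^'m \<Rightarrow> real) \<Rightarrow> real^'n^'m" where
  "mix lam = (\<Sum>D\<in>det_channels. lam D *\<^sub>R D)"

definition Lambda :: "real^'n^'m \<Rightarrow> (real^'n^'m \<Rightarrow> real) set" where
  "Lambda W = {lam. prob_dist_det lam \<and> W = mix lam}"

definition C11 :: "(real^'n^'m \<Rightarrow> real) \<Rightarrow> real" where
  "C11 lam = (\<Sum>D\<in>det_channels. lam D * log 2 (real (rank D)))"

definition C11bar :: "real^'n^'m \<Rightarrow> real" where
  "C11bar W = (SUP lam\<in>Lambda W. C11 lam)"

definition I_maximized :: "(real^'n^'m) set \<Rightarrow> bool" where
  "I_maximized S \<longleftrightarrow> (\<exists>lam. prob_dist_det lam \<and> {D. lam D \<noteq> 0} = S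
      \<and> C11 lam = C11bar (mix lam))"

end

theory Submission
  imports Defs
begin

text \<open>Let \<open>\<lambda>\<close> be supported exactly on \<open>{D, U\<^sub>j}\<close>. Column \<open>j\<close> of \<open>D\<close> vanishes in two rows
\<open>i\<^sub>1 \<noteq> i\<^sub>2\<close>. Exchanging row \<open>i\<^sub>1\<close> between \<open>D\<close> and \<open>U\<^sub>j\<close> gives deterministic channels \<open>D'\<close>, \<open>E\<close> with
\<open>D' + E = D + U\<^sub>j\<close>; each has a row \<open>e\<^sub>j\<close> and a nonzero row vanishing at \<open>j\<close>, so both have rank
at least 2. Moving the mass \<open>q = min \<lambda>\<^sub>D \<lambda>\<^sub>U\<close> from \<open>D\<close>, \<open>U\<^sub>j\<close> to \<open>D'\<close>, \<open>E\<close> keeps the mixture and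
raises \<open>C\<^sub>1\<^sub>1\<close> by \<open>q (log rk D' + log rk E - log rk D - log rk U\<^sub>j) > 0\<close>, because \<open>rk U\<^sub>j = 1\<close> and
\<open>rk D \<le> rk D' + 1 < rk D' \<cdot> rk E\<close>. So \<open>\<lambda>\<close> does not attain \<open>C\<^sub>1\<^sub>1\<close>-bar.\<close>

lemma finite_det_channels: "finite (det_channels :: (real^'n^'m) set)"
proof -
  have "det_channels \<subseteq> range (\<lambda>f :: 'm \<Rightarrow> 'n \<Rightarrow> bool. \<chi> i k. if f i k then (1::real) else 0)"
  proof
    fix A :: "real^'n^'m" assume "A \<in> det_channels"
    then have "A = (\<chi> i k. if A $ i $ k = 1 then 1 else 0)"
      by (force simp: det_channels_def vec_eq_iff)
    then show "A \<in> range (\<lambda>f :: 'm \<Rightarrow> 'n \<Rightarrow> bool. \<chi> i k. if f i k then (1::real) else 0)"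
      by (rule range_eqI[where x = "\<lambda>i k. A $ i $ k = 1"])
  qed
  then show ?thesis by (rule finite_subset) simp
qed

lemma C11_le_C11bar:
  fixes W :: "real^'n^'m"
  assumes "lam \<in> Lambda W"
  shows "C11 lam \<le> C11bar W"
  unfolding C11bar_def
proof (rule cSUP_upper[OF assms], rule bdd_aboveI2)
  fix l :: "real^'n^'m \<Rightarrow> real" assume "l \<in> Lambda W"
  then have l0: "\<And>X. 0 \<le> l X" and l1: "\<And>X. X \<in> det_channels \<Longrightarrow> l X \<le> 1"
    using member_le_sum[of _ det_channels l] finite_det_channels
    by (auto simp: Lambda_def prob_dist_det_def)
  show "C11 l \<le> (\<Sum>X\<in>(det_channels :: (real^'n^'m) set). \<bar>log 2 (real (rank X))\<bar>)"
    unfolding C11_def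
  proof (rule sum_mono)
    fix X :: "real^'n^'m" assume "X \<in> det_channels"
    then show "l X * log 2 (real (rank X)) \<le> \<bar>log 2 (real (rank X))\<bar>"
      using l0[of X] l1[of X] by (metis abs_ge_self abs_mult abs_of_nonneg mult_left_le_one_le
           abs_ge_zero order_trans)
  qed
qed

lemma sum_transfer_mass_scaleR:
  fixes h :: "'a \<Rightarrow> 'b::real_vector"
  assumes "finite S" "{a, b, a', b'} \<subseteq> S"
  shows "(\<Sum>x\<in>S. (l x + q * (indicator {a'} x + indicator {b'} x - indicator {a} x - indicator {b} x)) *\<^sub>R h x)
    = (\<Sum>x\<in>S. l x *\<^sub>R h x) + q *\<^sub>R (h a' + h b' - h a - h b)"
proof -
  have "(l x + q * (indicator {a'} x + indicator {b'} x - indicator {a} x - indicator {b} x)) *\<^sub>R h x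
      = l x *\<^sub>R h x + q *\<^sub>R (indicator {a'} x *\<^sub>R h x + indicator {b'} x *\<^sub>R h x
          - indicator {a} x *\<^sub>R h x - indicator {b} x *\<^sub>R h x)" for x
    by (simp add: algebra_simps)
  moreover have "{x. x = c \<and> x \<in> S} = {c}" if "c \<in> S" for c
    using that by blast
  ultimately show ?thesis
    using assms by (simp add: sum.distrib sum_subtractf flip: scaleR_sum_right)
qed

definition transfer_mass :: "real \<Rightarrow> 'a \<Rightarrow> 'a \<Rightarrow> 'a \<Rightarrow> 'a \<Rightarrow> ('a \<Rightarrow> real) \<Rightarrow> 'a \<Rightarrow> real" where
  "transfer_mass q a b a' b' l =
     (\<lambda>x. l x + q * (indicator {a'} x + indicator {b'} x - indicator {a} x - indicator {b} x))"

lemma prob_dist_det_transfer_mass: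
  fixes lam :: "real^'n^'m \<Rightarrow> real"
  assumes "prob_dist_det lam" "A \<noteq> B" "{A, B, A', B'} \<subseteq> det_channels"
    and "0 \<le> q" "q \<le> lam A" "q \<le> lam B"
  shows "prob_dist_det (transfer_mass q A B A' B' lam)"
  unfolding prob_dist_det_def
proof (intro conjI allI impI)
  fix X :: "real^'n^'m"
  show "0 \<le> transfer_mass q A B A' B' lam X"
    using assms by (auto simp: transfer_mass_def prob_dist_det_def indicator_def)
  show "transfer_mass q A B A' B' lam X = 0" if "X \<notin> det_channels"
    using assms that by (auto simp: transfer_mass_def prob_dist_det_def indicator_def)
next
  show "(\<Sum>X\<in>det_channels. transfer_mass q A B A' B' lam X) = 1"
    using sum_transfer_mass_scaleR[OF finite_det_channels assms(3), of lam q "\<lambda>_. 1 :: real"] assms(1)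
    by (simp add: transfer_mass_def prob_dist_det_def)
qed

lemma mix_transfer_mass:
  assumes "{A, B, A', B'} \<subseteq> det_channels" "A' + B' = A + B"
  shows "mix (transfer_mass q A B A' B' lam) = mix lam"
  using sum_transfer_mass_scaleR[OF finite_det_channels assms(1), of lam q id] assms(2)
  by (simp add: mix_def transfer_mass_def)

lemma C11_transfer_mass:
  assumes "{A, B, A', B'} \<subseteq> det_channels"
  shows "C11 (transfer_mass q A B A' B' lam) = C11 lam
    + q * (log 2 (rank A') + log 2 (rank B') - log 2 (rank A) - log 2 (rank B))"
  using sum_transfer_mass_scaleR[OF finite_det_channels assms, of lam q "\<lambda>X. log 2 (rank X)"]
  by (simp add: C11_def transfer_mass_def)

lemma C11_lt_C11bar_if_improving_transfer:
  fixes lam :: "real^'n^'m \<Rightarrow> real"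
  assumes "prob_dist_det lam" "A \<noteq> B" "{A, B, A', B'} \<subseteq> det_channels" "A' + B' = A + B"
    and "0 < q" "q \<le> lam A" "q \<le> lam B"
    and "log 2 (rank A) + log 2 (rank B) < log 2 (rank A') + log 2 (rank B')"
  shows "C11 lam < C11bar (mix lam)"
proof -
  let ?lam' = "transfer_mass q A B A' B' lam"
  have "prob_dist_det ?lam'"
    using prob_dist_det_transfer_mass[OF assms(1-3)] assms(5-7) by simp
  then have "?lam' \<in> Lambda (mix lam)"
    using mix_transfer_mass[OF assms(3,4)] by (simp add: Lambda_def)
  then have "C11 ?lam' \<le> C11bar (mix lam)"
    by (rule C11_le_C11bar)
  moreover have "C11 lam < C11 ?lam'"
    using C11_transfer_mass[OF assms(3)] assms(5,8) by simp
  ultimately show ?thesis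
    by simp
qed

definition replace_row :: "'m \<Rightarrow> 'a^'n^'m \<Rightarrow> 'a^'n^'m \<Rightarrow> 'a^'n^'m" where
  "replace_row i A B = (\<chi> k. if k = i then B $ k else A $ k)"

lemma replace_row_nth: "replace_row i A B $ k = (if k = i then B $ k else A $ k)"
  by (simp add: replace_row_def)

lemma replace_row_add_swap:
  fixes A B :: "'a::ab_semigroup_add^'n^'m"
  shows "replace_row i A B + replace_row i B A = A + B"
  by (simp add: vec_eq_iff replace_row_nth add.commute)

lemma replace_row_det_channels:
  assumes "A \<in> det_channels" "B \<in> det_channels"
  shows "replace_row i A B \<in> det_channels"
  using assms by (auto simp: det_channels_def channel_def replace_row_nth)

lemma Uch_det_channels: "Uch j \<in> det_channels"
  by (simp add: det_channels_def channel_def Uch_def)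

lemma det_channels_row_nonzero:
  assumes "D \<in> det_channels"
  shows "D $ i \<noteq> 0"
proof
  assume "D $ i = 0"
  then have "(\<Sum>k\<in>UNIV. D $ i $ k) = 0"
    by simp
  then show False
    using assms by (simp add: det_channels_def channel_def)
qed

lemma rows_eq_range: "rows (A :: real^'n^'m) = range (($) A)"
  by (auto simp: rows_def row_def vec_lambda_eta)

lemma rank_le_rank_replace_row:
  fixes A B :: "real^'n^'m"
  shows "rank A \<le> rank (replace_row i A B) + 1"
proof -
  have "rows A \<subseteq> insert (A $ i) (rows (replace_row i A B))"
    by (auto simp: rows_eq_range replace_row_nth)
  then have "dim (rows A) \<le> dim (insert (A $ i) (rows (replace_row i A B)))"
    by (rule dim_subset)
  also have "\<dots> \<le> dim (rows (replace_row i A B)) + 1"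
    by (simp add: dim_insert)
  finally show ?thesis
    by (simp add: row_rank_def)
qed

lemma rank_ge_2:
  fixes A :: "real^'n^'m"
  assumes "A $ a $ j \<noteq> 0" "A $ b $ j = 0" "A $ b \<noteq> 0"
  shows "2 \<le> rank A"
proof -
  have "A $ a \<notin> span {A $ b}"
    using assms by (auto simp: span_singleton)
  then have "independent {A $ a, A $ b}"
    using assms by (simp add: independent_insert)
  moreover have "{A $ a, A $ b} \<subseteq> rows A"
    by (auto simp: rows_eq_range)
  ultimately have "card {A $ a, A $ b} \<le> dim (rows A)"
    by (rule independent_card_le_dim[rotated])
  moreover have "A $ a \<noteq> A $ b"
    using assms by auto
  ultimately show ?thesis
    by (simp add: row_rank_def)
qed

lemma rank_le_1_if_rows_equal:
  fixes A :: "real^'n^'m"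
  assumes "\<And>i. A $ i = u"
  shows "rank A \<le> 1"
proof -
  have "rows A \<subseteq> span {u}"
    using assms by (auto simp: rows_eq_range span_base)
  then have "dim (rows A) \<le> card {u}"
    by (intro dim_le_card) auto
  then show ?thesis
    by (simp add: row_rank_def)
qed

lemma log2_lt_add_log2:
  fixes a b c :: nat
  assumes "a \<le> b + 1" "2 \<le> b" "2 \<le> c"
  shows "log 2 a < log 2 b + log 2 c"
proof (cases "a = 0")
  case True
  have "1 \<le> log 2 b" "1 \<le> log 2 c"
    using assms by simp_all
  moreover have "log 2 (real a) = 0"
    using True by (simp add: log_def)
  ultimately show ?thesis
    by linarith
next
  case False
  have "a < b * c"
    using assms mult_le_mono2[of 2 c b] by linarith
  then have "real a < real b * real c"
    by (simp flip: of_nat_mult)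
  then have "log 2 a < log 2 (real b * real c)"
    using False by (intro log_less) auto
  then show ?thesis
    using assms by (simp add: log_mult)
qed

text \<open>The case \<open>n = 0\<close> relies on the junk value \<open>log 2 0 = 0\<close>.\<close>
lemma log2_le_0_if_le_1:
  fixes n :: nat
  assumes "n \<le> 1"
  shows "log 2 n \<le> 0"
  using assms by (cases n) (auto simp: log_def)

lemma obtain_two_not:
  fixes P :: "'a::finite \<Rightarrow> bool"
  assumes "2 \<le> CARD('a)" "card {x. P x} \<le> CARD('a) - 2"
  obtains a b where "a \<noteq> b" "\<not> P a" "\<not> P b"
proof -
  have "card {x. \<not> P x} = CARD('a) - card {x. P x}"
    using card_Diff_subset[of "{x. P x}" UNIV] by (simp add: set_diff_eq)
  then have "2 \<le> card {x. \<not> P x}"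
    using assms by linarith
  then obtain S where "S \<subseteq> {x. \<not> P x}" "card S = 2"
    by (meson obtain_subset_with_card_n)
  then show ?thesis
    using that by (auto simp: card_2_iff)
qed

lemma log_rank_add_lt_replace_row_Uch:
  fixes D :: "real^'n^'m"
  assumes "D \<in> det_channels" "i1 \<noteq> i2" "D $ i1 $ j = 0" "D $ i2 $ j = 0"
  shows "log 2 (rank D) + log 2 (rank (Uch j :: real^'n^'m))
    < log 2 (rank (replace_row i1 D (Uch j))) + log 2 (rank (replace_row i1 (Uch j) D))"
proof -
  let ?D' = "replace_row i1 D (Uch j)" and ?E = "replace_row i1 (Uch j) D"
  have "2 \<le> rank ?D'"
    using assms det_channels_row_nonzero[OF assms(1)]
    by (intro rank_ge_2[of ?D' i1 j i2]) (auto simp: replace_row_nth Uch_def)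
  moreover have "2 \<le> rank ?E"
    using assms det_channels_row_nonzero[OF assms(1)]
    by (intro rank_ge_2[of ?E i2 j i1]) (auto simp: replace_row_nth Uch_def)
  moreover have "rank D \<le> rank ?D' + 1"
    by (rule rank_le_rank_replace_row)
  ultimately have "log 2 (rank D) < log 2 (rank ?D') + log 2 (rank ?E)"
    by (intro log2_lt_add_log2)
  moreover have "log 2 (rank (Uch j :: real^'n^'m)) \<le> 0"
    by (intro log2_le_0_if_le_1 rank_le_1_if_rows_equal) (simp add: Uch_def)
  ultimately show ?thesis
    by linarith
qed

theorem proposition6:
  fixes D :: "real^'n^'m" and j :: 'n
  assumes "CARD('m) \<ge> 2" and "CARD('n) \<ge> 2"
    and "D \<in> det_channels"
    and "card {i. D $ i $ j \<noteq> 0} \<le> CARD('m) - 2"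
  shows "\<not> I_maximized {D, Uch j}"
proof
  assume "I_maximized {D, Uch j}"
  then obtain lam where lam: "prob_dist_det lam" and supp: "{X. lam X \<noteq> 0} = {D, Uch j}"
    and opt: "C11 lam = C11bar (mix lam)"
    unfolding I_maximized_def by blast
  obtain i1 i2 where rows: "i1 \<noteq> i2" "D $ i1 $ j = 0" "D $ i2 $ j = 0"
    using obtain_two_not[of "\<lambda>i. D $ i $ j \<noteq> 0"] assms(1,4) by auto
  define U :: "real^'n^'m" where "U = Uch j"
  have "D \<noteq> U"
    using rows by (auto simp: U_def Uch_def)
  have "0 < lam D" "0 < lam U"
    using lam supp by (auto simp: prob_dist_det_def U_def order_le_less)
  have "{D, U, replace_row i1 D U, replace_row i1 U D} \<subseteq> det_channels"
    using assms(3) Uch_det_channels replace_row_det_channels by (auto simp: U_def)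
  then have "C11 lam < C11bar (mix lam)"
  proof (rule C11_lt_C11bar_if_improving_transfer[OF lam \<open>D \<noteq> U\<close> _ replace_row_add_swap])
    show "0 < min (lam D) (lam U)"
      using \<open>0 < lam D\<close> \<open>0 < lam U\<close> by simp
    show "log 2 (rank D) + log 2 (rank U)
      < log 2 (rank (replace_row i1 D U)) + log 2 (rank (replace_row i1 U D))"
      unfolding U_def by (rule log_rank_add_lt_replace_row_Uch[OF assms(3) rows])
  qed simp_all
  with opt show False
    by simp
qed

end
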